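(* Let $f:(L_1,[\cdot,\cdot]_1,\alpha_1)\to(L_2,[\cdot,\cdot]_2,\alpha_2)$ be a surjective morphism of Hom-Lie algebras over a field $F$. If $\mu_A$ is a fuzzy Hom-Lie subalgebra of $L_1$, then the fuzzy set $\mu_{f(A)}$ on $L_2$, defined by $\mu_{f(A)}(y)=\sup_{x\in f^{-1}(y)}\mu_A(x)$ for $y\in f(L_1)$ and $\mu_{f(A)}(y)=0$ otherwise, is a fuzzy Hom-Lie subalgebra of $L_2$.
   Context: A Hom-Lie algebra over $F$ is a triple $(L,[\cdot,\cdot],\alpha)$ with $L$ an $F$-vector space, $\alpha:L\to L$ linear and $[\cdot,\cdot]$ bilinear, skew-symmetric, satisfying $[\alpha(x),[y,z]]+[\alpha(y),[z,x]]+[\alpha(z),[x,y]]=0$. A morphism of Hom-Lie algebras is a linear map $f$ with $f([x,y]_1)=[f(x),f(y)]_2$ and $f\circ\alpha_1=\alpha_2\circ f$. A fuzzy subset $\mu:L\to[0,1]$ is a fuzzy Hom-Lie subalgebra if for all $x,y\in L$, $c\in F$: $\mu(x+y)\ge\min\{\mu(x),\mu(y)\}$, $\mu(cx)\ge\mu(x)$, $\mu([x,y])\ge\min\{\mu(x),\mu(y)\}$, $\mu(\alpha(x))\ge\mu(x)$. *)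

theory Defs
  imports Complex_Main
begin

definition hom_lie_algebra ::
  "('k::field \<Rightarrow> 'v::ab_group_add \<Rightarrow> 'v) \<Rightarrow> ('v \<Rightarrow> 'v \<Rightarrow> 'v) \<Rightarrow> ('v \<Rightarrow> 'v) \<Rightarrow> bool" where
  "hom_lie_algebra sc br \<alpha> \<longleftrightarrow>
     vector_space sc \<and>
     Vector_Spaces.linear sc sc \<alpha> \<and>
     (\<forall>x. Vector_Spaces.linear sc sc (br x)) \<and>
     (\<forall>y. Vector_Spaces.linear sc sc (\<lambda>x. br x y)) \<and>
     (\<forall>x y. br x y = - br y x) \<and>
     (\<forall>x y z. br (\<alpha> x) (br y z) + br (\<alpha> y) (br z x) + br (\<alpha> z) (br x y) = 0)"

definition hom_lie_morphism ::
  "('k::field \<Rightarrow> 'v::ab_group_add \<Rightarrow> 'v) \<Rightarrow> ('v \<Rightarrow> 'v \<Rightarrow> 'v) \<Rightarrow> ('v \<Rightarrow> 'v) \<Rightarrow>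
   ('k \<Rightarrow> 'w::ab_group_add \<Rightarrow> 'w) \<Rightarrow> ('w \<Rightarrow> 'w \<Rightarrow> 'w) \<Rightarrow> ('w \<Rightarrow> 'w) \<Rightarrow>
   ('v \<Rightarrow> 'w) \<Rightarrow> bool" where
  "hom_lie_morphism sc1 br1 \<alpha>1 sc2 br2 \<alpha>2 f \<longleftrightarrow>
     Vector_Spaces.linear sc1 sc2 f \<and>
     (\<forall>x y. f (br1 x y) = br2 (f x) (f y)) \<and>
     f \<circ> \<alpha>1 = \<alpha>2 \<circ> f"

definition fuzzy_hom_lie_subalgebra ::
  "('k::field \<Rightarrow> 'v::ab_group_add \<Rightarrow> 'v) \<Rightarrow> ('v \<Rightarrow> 'v \<Rightarrow> 'v) \<Rightarrow> ('v \<Rightarrow> 'v) \<Rightarrow> ('v \<Rightarrow> real) \<Rightarrow> bool" where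
  "fuzzy_hom_lie_subalgebra sc br \<alpha> \<mu> \<longleftrightarrow>
     (\<forall>x. 0 \<le> \<mu> x \<and> \<mu> x \<le> 1) \<and>
     (\<forall>x y. \<mu> (x + y) \<ge> min (\<mu> x) (\<mu> y)) \<and>
     (\<forall>c x. \<mu> (sc c x) \<ge> \<mu> x) \<and>
     (\<forall>x y. \<mu> (br x y) \<ge> min (\<mu> x) (\<mu> y)) \<and>
     (\<forall>x. \<mu> (\<alpha> x) \<ge> \<mu> x)"

definition fuzzy_image :: "('v \<Rightarrow> 'w) \<Rightarrow> ('v \<Rightarrow> real) \<Rightarrow> 'w \<Rightarrow> real" where
  "fuzzy_image f \<mu> y = (if y \<in> range f then (SUP x\<in>{x. f x = y}. \<mu> x) else 0)"

end

theory Submission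
  imports Defs
begin

text \<open>Each closure
  property transfers because f carries the operation on \<open>L\<^sub>1\<close> to the one on
  \<open>L\<^sub>2\<close>: degrees \<open>\<mu> x\<close> of the fibre of y bound the degree of the image of the
  operation applied to x, and for binary operations any level below both suprema is attained by
  a pair of fibre elements.\<close>

lemma fuzzy_image_in_range:
  "y \<in> range f \<Longrightarrow> fuzzy_image f \<mu> y = (SUP x\<in>{x. f x = y}. \<mu> x)"
  by (simp add: fuzzy_image_def)

lemma fuzzy_image_outside_range:
  "y \<notin> range f \<Longrightarrow> fuzzy_image f \<mu> y = 0"
  by (simp add: fuzzy_image_def)

lemma fuzzy_image_le:
  assumes "\<And>x. \<mu> x \<le> c" and "0 \<le> c"
  shows "fuzzy_image f \<mu> y \<le> c"
proof (cases "y \<in> range f")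
  case True
  then show ?thesis
    unfolding fuzzy_image_in_range[OF True] by (intro cSUP_least assms) auto
qed (simp add: fuzzy_image_outside_range assms)

lemma fuzzy_image_upper:
  assumes "bdd_above (range \<mu>)"
  shows "\<mu> x \<le> fuzzy_image f \<mu> (f x)"
  unfolding fuzzy_image_in_range[OF rangeI]
  by (rule cSUP_upper) (auto intro: bdd_above_mono[OF assms])

lemma fuzzy_image_nonneg:
  assumes "bdd_above (range \<mu>)" and "\<And>x. 0 \<le> \<mu> x"
  shows "0 \<le> fuzzy_image f \<mu> y"
proof (cases "y \<in> range f")
  case True
  then obtain x where "f x = y" by blast
  then show ?thesis using assms(2)[of x] fuzzy_image_upper[OF assms(1), of x f] by simp
qed (simp add: fuzzy_image_outside_range)

lemma fuzzy_image_less_witness: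
  assumes "bdd_above (range \<mu>)" and "y \<in> range f" and "t < fuzzy_image f \<mu> y"
  obtains x where "f x = y" and "t < \<mu> x"
proof -
  have "bdd_above (\<mu> ` {x. f x = y})" by (rule bdd_above_mono[OF assms(1)]) auto
  moreover have "{x. f x = y} \<noteq> {}" using assms(2) by auto
  ultimately show ?thesis
    using that assms(3) less_cSUP_iff[of "{x. f x = y}" \<mu> t]
    unfolding fuzzy_image_in_range[OF assms(2)] by blast
qed

lemma fuzzy_image_unary_closed:
  assumes bdd: "bdd_above (range \<mu>)" and nonneg: "\<And>x. 0 \<le> \<mu> x"
    and closed: "\<And>x. \<mu> x \<le> \<mu> (g x)" and compat: "\<And>x. f (g x) = h (f x)"
  shows "fuzzy_image f \<mu> y \<le> fuzzy_image f \<mu> (h y)"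
proof (cases "y \<in> range f")
  case True
  show ?thesis
    unfolding fuzzy_image_in_range[OF True]
  proof (rule cSUP_least)
    show "{x. f x = y} \<noteq> {}" using True by auto
  next
    fix x assume "x \<in> {x. f x = y}"
    then have "fuzzy_image f \<mu> (f (g x)) = fuzzy_image f \<mu> (h y)" by (simp add: compat)
    then show "\<mu> x \<le> fuzzy_image f \<mu> (h y)"
      using closed[of x] fuzzy_image_upper[OF bdd, of "g x" f] by linarith
  qed
next
  case False
  then show ?thesis
    using fuzzy_image_nonneg[OF bdd nonneg, of f "h y"] by (simp add: fuzzy_image_outside_range)
qed

lemma fuzzy_image_binary_closed:
  assumes bdd: "bdd_above (range \<mu>)" and nonneg: "\<And>x. 0 \<le> \<mu> x"
    and closed: "\<And>x x'. min (\<mu> x) (\<mu> x') \<le> \<mu> (g x x')"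
    and compat: "\<And>x x'. f (g x x') = h (f x) (f x')"
  shows "min (fuzzy_image f \<mu> y) (fuzzy_image f \<mu> y') \<le> fuzzy_image f \<mu> (h y y')"
proof (cases "y \<in> range f \<and> y' \<in> range f")
  case True
  show ?thesis
  proof (rule dense_le)
    fix t assume "t < min (fuzzy_image f \<mu> y) (fuzzy_image f \<mu> y')"
    then have "t < fuzzy_image f \<mu> y" "t < fuzzy_image f \<mu> y'" by simp_all
    with True obtain x x' where "f x = y" "t < \<mu> x" "f x' = y'" "t < \<mu> x'"
      using fuzzy_image_less_witness[OF bdd] by meson
    moreover have "\<mu> (g x x') \<le> fuzzy_image f \<mu> (h y y')"
      using fuzzy_image_upper[OF bdd, of "g x x'" f] by (simp add: compat \<open>f x = y\<close> \<open>f x' = y'\<close>)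
    ultimately show "t \<le> fuzzy_image f \<mu> (h y y')"
      using closed[of x x'] by linarith
  qed
next
  case False
  then have "min (fuzzy_image f \<mu> y) (fuzzy_image f \<mu> y') \<le> 0"
    by (auto simp: fuzzy_image_outside_range min_le_iff_disj)
  then show ?thesis using fuzzy_image_nonneg[OF bdd nonneg, of f "h y y'"] by linarith
qed

theorem theorem6p2:
  fixes sc1 :: "'k::field \<Rightarrow> 'v::ab_group_add \<Rightarrow> 'v"
    and br1 :: "'v \<Rightarrow> 'v \<Rightarrow> 'v" and \<alpha>1 :: "'v \<Rightarrow> 'v"
    and sc2 :: "'k \<Rightarrow> 'w::ab_group_add \<Rightarrow> 'w"
    and br2 :: "'w \<Rightarrow> 'w \<Rightarrow> 'w" and \<alpha>2 :: "'w \<Rightarrow> 'w"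
    and f :: "'v \<Rightarrow> 'w" and \<mu> :: "'v \<Rightarrow> real"
  assumes "hom_lie_algebra sc1 br1 \<alpha>1"
    and "hom_lie_algebra sc2 br2 \<alpha>2"
    and "hom_lie_morphism sc1 br1 \<alpha>1 sc2 br2 \<alpha>2 f"
    and "surj f"
    and "fuzzy_hom_lie_subalgebra sc1 br1 \<alpha>1 \<mu>"
  shows "fuzzy_hom_lie_subalgebra sc2 br2 \<alpha>2 (fuzzy_image f \<mu>)"
proof -
  have bounds: "\<And>x. 0 \<le> \<mu> x" "\<And>x. \<mu> x \<le> 1"
    and add: "\<And>x y. min (\<mu> x) (\<mu> y) \<le> \<mu> (x + y)"
    and scale: "\<And>c x. \<mu> x \<le> \<mu> (sc1 c x)"
    and bracket: "\<And>x y. min (\<mu> x) (\<mu> y) \<le> \<mu> (br1 x y)"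
    and twist: "\<And>x. \<mu> x \<le> \<mu> (\<alpha>1 x)"
    using assms(5) by (auto simp: fuzzy_hom_lie_subalgebra_def)
  have "Vector_Spaces.linear sc1 sc2 f" and f_bracket: "\<And>x y. f (br1 x y) = br2 (f x) (f y)"
    and f_twist: "\<And>x. f (\<alpha>1 x) = \<alpha>2 (f x)"
    using assms(3) by (auto simp: hom_lie_morphism_def fun_eq_iff)
  then have f_add: "\<And>x y. f (x + y) = f x + f y" and f_scale: "\<And>c x. f (sc1 c x) = sc2 c (f x)"
    by (auto simp: Vector_Spaces.linear_iff)
  have bdd: "bdd_above (range \<mu>)" using bounds(2) by (intro bdd_aboveI2)
  note unary = fuzzy_image_unary_closed[OF bdd bounds(1)]
  note binary = fuzzy_image_binary_closed[OF bdd bounds(1)]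
  have "min (fuzzy_image f \<mu> x) (fuzzy_image f \<mu> y) \<le> fuzzy_image f \<mu> (x + y)" for x y
    by (rule binary[where g = "(+)"]) (simp_all add: add f_add)
  moreover have "fuzzy_image f \<mu> x \<le> fuzzy_image f \<mu> (sc2 c x)" for c x
    by (rule unary[where g = "sc1 c"]) (simp_all add: scale f_scale)
  moreover have "min (fuzzy_image f \<mu> x) (fuzzy_image f \<mu> y) \<le> fuzzy_image f \<mu> (br2 x y)" for x y
    by (rule binary[where g = br1]) (simp_all add: bracket f_bracket)
  moreover have "fuzzy_image f \<mu> x \<le> fuzzy_image f \<mu> (\<alpha>2 x)" for x
    by (rule unary[where g = \<alpha>1]) (simp_all add: twist f_twist)
  moreover have "0 \<le> fuzzy_image f \<mu> y \<and> fuzzy_image f \<mu> y \<le> 1" for y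
    using fuzzy_image_nonneg[OF bdd bounds(1), of f y] fuzzy_image_le[of \<mu> 1 f y] bounds(2)
    by simp
  ultimately show ?thesis by (simp add: fuzzy_hom_lie_subalgebra_def)
qed

end
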